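(* Let $\alpha=1/10$ and $V(\mathbf{y})=1+\sum_{i=1}^{n-1}\alpha^iy_i$ for $\mathbf{y}\in\mathbb{R}_+^{n-1}$. Then for all $\mathbf{y}\in\mathbb{R}_+^{n-1}$, $$\mathcal{L}_nV(\mathbf{y})\le\alpha-\frac{1-\alpha}{2}\sum_{i=1}^{n-1}\alpha^iy_i^2,$$ and consequently $\mathcal{L}_nV(\mathbf{y})\le\alpha-\frac{(1-\alpha)^2}{2\alpha}(V(\mathbf{y})-1)^2$.
   Context: Fix $n\ge2$ and a probability law $\theta$ on $(0,\infty)$ with $\int z\,\theta(dz)=1$. $\mathcal{L}_n$ is the generator of the gap process of the Stochastic Follow-the-Leader system, acting on functions $f$ on $\mathbb{R}_+^{n-1}$ by $$\mathcal{L}_nf(\mathbf{y})=y_{n-1}\mathbb{E}_U[f(\mathbf{y}-y_{n-1}Ue_{n-1})-f(\mathbf{y})]+\sum_{i=1}^{n-2}y_i\mathbb{E}_U[f(\mathbf{y}+y_iU(e_{i+1}-e_i))-f(\mathbf{y})]+\mathbb{E}_\theta[f(\mathbf{y}+Ze_1)-f(\mathbf{y})],$$ with $U\sim\mathrm{U}(0,1)$, $Z\sim\theta$ (applied to linear functions, where the expectations are finite). *)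

theory Defs
  imports "HOL-Probability.Probability"
begin

text \<open>Gap vectors y in R_+^(n-1) are represented as functions nat => real,
  using the coordinates y 1, ..., y (n-1).\<close>

definition EU :: "(real \<Rightarrow> real) \<Rightarrow> real" where
  "EU g = integral\<^sup>L (uniform_measure lborel {0<..<1}) g"

definition SFL_gen :: "nat \<Rightarrow> real measure \<Rightarrow> ((nat \<Rightarrow> real) \<Rightarrow> real) \<Rightarrow> (nat \<Rightarrow> real) \<Rightarrow> real" where
  "SFL_gen n \<theta> f y =
     y (n - 1) * EU (\<lambda>u. f (y(n - 1 := y (n - 1) - y (n - 1) * u)) - f y)
     + (\<Sum>i = 1..n - 2. y i * EU (\<lambda>u. f (y(i := y i - y i * u, i + 1 := y (i + 1) + y i * u)) - f y))
     + integral\<^sup>L \<theta> (\<lambda>z. f (y(1 := y 1 + z)) - f y)"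

definition Lyap :: "nat \<Rightarrow> real \<Rightarrow> (nat \<Rightarrow> real) \<Rightarrow> real" where
  "Lyap n \<alpha> y = 1 + (\<Sum>i = 1..n - 1. \<alpha> ^ i * y i)"

end

theory Submission
  imports Defs
begin

text \<open>V is affine, so every jump of the gap process changes V by an amount linear in U
  (or in Z), and the drift is computed exactly:
  L V(y) = a - a^(n-1) y(n-1)^2 / 2 - sum over i < n-1 of (1-a) a^i y(i)^2 / 2.
  The arrival of a new gap contributes a E[Z] = a; gap i handing the fraction U of itself to
  gap i+1 contributes -(1-a) a^i y(i)^2 / 2; the last gap, which only shrinks, contributes
  -a^(n-1) y(n-1)^2 / 2. This yields the first bound for every a \<ge> 0, using only E[Z] = 1 and
  not the sign of the gaps. The second bound is Cauchy-Schwarz with the weights a^i, whose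
  total mass is at most a/(1-a).\<close>

lemma EU_linear: "EU (\<lambda>u. c * u) = c / 2"
proof -
  have uniform_density:
    "uniform_measure lborel {0<..<1::real} = density lborel (\<lambda>x. ennreal (indicator {0<..<1} x))"
    unfolding uniform_measure_def by (intro density_cong) (auto split: split_indicator)
  have "EU (\<lambda>u. c * u) = integral\<^sup>L lborel (\<lambda>x. indicator {0<..<1} x *\<^sub>R (c * x))"
    unfolding EU_def uniform_density by (subst integral_density) auto
  also have "\<dots> = (LBINT x=ereal 0..ereal 1. c * x)"
    unfolding interval_lebesgue_integral_def set_lebesgue_integral_def einterval_def
    by (simp add: indicator_def)
  also have "\<dots> = c * 1\<^sup>2 / 2 - c * 0\<^sup>2 / 2"
    by (rule interval_integral_FTC_finite[where F = "\<lambda>x. c * x\<^sup>2 / 2"])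
       (auto simp flip: has_real_derivative_iff_has_vector_derivative
             intro!: derivative_eq_intros continuous_intros)
  finally show ?thesis by simp
qed

lemma Lyap_diff: "Lyap n a y' - Lyap n a y = (\<Sum>i = 1..n - 1. a ^ i * (y' i - y i))"
  by (simp add: Lyap_def sum_subtractf algebra_simps)

lemma Lyap_fun_upd:
  assumes "k \<in> {1..n - 1}"
  shows "Lyap n a (y(k := v)) - Lyap n a y = a ^ k * (v - y k)"
proof -
  have "(\<Sum>i = 1..n - 1. a ^ i * ((y(k := v)) i - y i))
      = (\<Sum>i\<in>{1..n - 1}. if i = k then a ^ k * (v - y k) else 0)"
    by (rule sum.cong) auto
  with assms show ?thesis by (simp add: Lyap_diff)
qed

lemma Lyap_fun_upd2:
  assumes "k \<in> {1..n - 1}" "k + 1 \<in> {1..n - 1}"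
  shows "Lyap n a (y(k := v, k + 1 := w)) - Lyap n a y
           = a ^ k * (v - y k) + a ^ (k + 1) * (w - y (k + 1))"
proof -
  have "(\<Sum>i = 1..n - 1. a ^ i * ((y(k := v, k + 1 := w)) i - y i))
      = (\<Sum>i\<in>{1..n - 1}. (if i = k then a ^ k * (v - y k) else 0)
                         + (if i = k + 1 then a ^ (k + 1) * (w - y (k + 1)) else 0))"
    by (rule sum.cong) auto
  with assms show ?thesis by (simp add: Lyap_diff sum.distrib)
qed

lemma SFL_gen_Lyap:
  assumes "n \<ge> 2" and "integral\<^sup>L \<theta> (\<lambda>z. z) = 1"
  shows "SFL_gen n \<theta> (Lyap n a) y
           = a - a ^ (n - 1) * (y (n - 1))\<^sup>2 / 2 - (\<Sum>i = 1..n - 2. (1 - a) * a ^ i * (y i)\<^sup>2 / 2)"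
proof -
  have last_gap: "y (n - 1) * EU (\<lambda>u. Lyap n a (y(n - 1 := y (n - 1) - y (n - 1) * u)) - Lyap n a y)
      = - (a ^ (n - 1) * (y (n - 1))\<^sup>2 / 2)"
  proof -
    have "n - 1 \<in> {1..n - 1}" using assms(1) by auto
    then have "(\<lambda>u. Lyap n a (y(n - 1 := y (n - 1) - y (n - 1) * u)) - Lyap n a y)
               = (\<lambda>u. - (a ^ (n - 1) * y (n - 1)) * u)"
      by (simp add: Lyap_fun_upd algebra_simps)
    then show ?thesis by (simp only: EU_linear) (simp add: power2_eq_square)
  qed
  have inner_gaps:
    "(\<Sum>i = 1..n - 2. y i * EU (\<lambda>u. Lyap n a (y(i := y i - y i * u, i + 1 := y (i + 1) + y i * u))
                                  - Lyap n a y))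
     = (\<Sum>i = 1..n - 2. - ((1 - a) * a ^ i * (y i)\<^sup>2 / 2))"
  proof (rule sum.cong)
    fix i assume "i \<in> {1..n - 2}"
    then have "i \<in> {1..n - 1}" "i + 1 \<in> {1..n - 1}" by auto
    then have "(\<lambda>u. Lyap n a (y(i := y i - y i * u, i + 1 := y (i + 1) + y i * u)) - Lyap n a y)
               = (\<lambda>u. ((a ^ (i + 1) - a ^ i) * y i) * u)"
      by (intro ext, subst Lyap_fun_upd2) (simp_all add: algebra_simps)
    then show "y i * EU (\<lambda>u. Lyap n a (y(i := y i - y i * u, i + 1 := y (i + 1) + y i * u))
                            - Lyap n a y)
               = - ((1 - a) * a ^ i * (y i)\<^sup>2 / 2)"
      by (simp only: EU_linear) (simp add: power2_eq_square field_simps)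
  qed simp
  have arrival: "integral\<^sup>L \<theta> (\<lambda>z. Lyap n a (y(1 := y 1 + z)) - Lyap n a y) = a"
  proof -
    have "1 \<in> {1..n - 1}" using assms(1) by auto
    then have "(\<lambda>z. Lyap n a (y(1 := y 1 + z)) - Lyap n a y) = (\<lambda>z. a * z)"
      by (simp add: Lyap_fun_upd)
    then show ?thesis using assms(2) by simp
  qed
  show ?thesis unfolding SFL_gen_def last_gap inner_gaps arrival by (simp add: sum_negf)
qed

lemma SFL_gen_Lyap_le_weighted_squares:
  assumes "n \<ge> 2" and "integral\<^sup>L \<theta> (\<lambda>z. z) = 1" and "0 \<le> a"
  shows "SFL_gen n \<theta> (Lyap n a) y \<le> a - (1 - a) / 2 * (\<Sum>i = 1..n - 1. a ^ i * (y i)\<^sup>2)"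
proof -
  obtain m where m: "n = Suc (Suc m)" using assms(1) by (metis add_2_eq_Suc le_Suc_ex)
  have "(\<Sum>i = 1..n - 2. (1 - a) * a ^ i * (y i)\<^sup>2 / 2) = (1 - a) / 2 * (\<Sum>i = 1..m. a ^ i * (y i)\<^sup>2)"
    unfolding m by (simp add: sum_distrib_left sum_divide_distrib algebra_simps)
  moreover have "(\<Sum>i = 1..n - 1. a ^ i * (y i)\<^sup>2)
                 = (\<Sum>i = 1..m. a ^ i * (y i)\<^sup>2) + a ^ Suc m * (y (Suc m))\<^sup>2"
    unfolding m by simp
  moreover have "0 \<le> a ^ Suc (Suc m) * (y (Suc m))\<^sup>2" using assms(3) by simp
  ultimately show ?thesis
    using SFL_gen_Lyap[OF assms(1,2), of a y] unfolding m by (simp add: field_simps)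
qed

lemma sum_power_le_geometric:
  fixes a :: real
  assumes "0 \<le> a" "a < 1"
  shows "(\<Sum>i = 1..m. a ^ i) \<le> a / (1 - a)"
proof (cases "m = 0")
  case False
  then have "(1 - a) * (\<Sum>i = 1..m. a ^ i) = a - a ^ Suc m" by (simp add: sum_gp_multiplied)
  also have "\<dots> \<le> a" using assms(1) by simp
  finally show ?thesis using assms by (simp add: pos_le_divide_eq mult.commute)
qed (use assms in simp)

lemma Lyap_minus_one_sq_le:
  fixes a :: real
  assumes "0 \<le> a" "a < 1"
  shows "(Lyap n a y - 1)\<^sup>2 \<le> a / (1 - a) * (\<Sum>i = 1..n - 1. a ^ i * (y i)\<^sup>2)"
proof -
  let ?S = "\<Sum>i = 1..n - 1. a ^ i * (y i)\<^sup>2"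
  have "(Lyap n a y - 1)\<^sup>2 = (\<Sum>i = 1..n - 1. sqrt (a ^ i) * (sqrt (a ^ i) * y i))\<^sup>2"
    unfolding Lyap_def using assms(1) by (simp add: mult.assoc[symmetric])
  also have "\<dots> \<le> (\<Sum>i = 1..n - 1. (sqrt (a ^ i))\<^sup>2) * (\<Sum>i = 1..n - 1. (sqrt (a ^ i) * y i)\<^sup>2)"
    by (rule Cauchy_Schwarz_ineq_sum)
  also have "\<dots> = (\<Sum>i = 1..n - 1. a ^ i) * ?S"
    using assms(1) by (simp add: power_mult_distrib)
  also have "\<dots> \<le> a / (1 - a) * ?S"
    using assms by (intro mult_right_mono sum_power_le_geometric sum_nonneg) auto
  finally show ?thesis .
qed

lemma SFL_gen_Lyap_le_quadratic:
  assumes "n \<ge> 2" and "integral\<^sup>L \<theta> (\<lambda>z. z) = 1" and "0 < a" "a < 1"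
  shows "SFL_gen n \<theta> (Lyap n a) y \<le> a - (1 - a)\<^sup>2 / (2 * a) * (Lyap n a y - 1)\<^sup>2"
proof -
  let ?S = "\<Sum>i = 1..n - 1. a ^ i * (y i)\<^sup>2"
  have "(1 - a)\<^sup>2 / (2 * a) * (Lyap n a y - 1)\<^sup>2 \<le> (1 - a)\<^sup>2 / (2 * a) * (a / (1 - a) * ?S)"
    using assms(3,4) Lyap_minus_one_sq_le[of a n y] by (intro mult_left_mono) auto
  also have "\<dots> = (1 - a) / 2 * ?S"
    using assms(3,4) by (simp add: power2_eq_square field_simps)
  finally show ?thesis
    using SFL_gen_Lyap_le_weighted_squares[OF assms(1,2), of a y] assms(3) by linarith
qed

theorem mainTheorem10:
  fixes n :: nat and \<theta> :: "real measure" and y :: "nat \<Rightarrow> real"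
  assumes "n \<ge> 2"
    and "prob_space \<theta>" and "sets \<theta> = sets borel"
    and "AE z in \<theta>. 0 < z"
    and "integrable \<theta> (\<lambda>z. z)" and "integral\<^sup>L \<theta> (\<lambda>z. z) = 1"
    and "\<forall>i\<in>{1..n - 1}. 0 \<le> y i"
  shows "SFL_gen n \<theta> (Lyap n (1/10)) y
           \<le> 1/10 - (1 - 1/10) / 2 * (\<Sum>i = 1..n - 1. (1/10) ^ i * (y i)\<^sup>2)
       \<and> SFL_gen n \<theta> (Lyap n (1/10)) y
           \<le> 1/10 - (1 - 1/10)\<^sup>2 / (2 * (1/10)) * (Lyap n (1/10) y - 1)\<^sup>2"
  using SFL_gen_Lyap_le_weighted_squares[OF assms(1,6), of "1/10" y]
        SFL_gen_Lyap_le_quadratic[OF assms(1,6), of "1/10" y]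
  by simp

end
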